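(* Let $G$ be a tight $(2P_2+P_1)$-free graph with $m=m(G)$, dense set $T=\{u_1,\dots,u_m\}$, and $S=\delta T$. Let $c$ be a b-colouring of $G$ with exactly $m$ colours and colour classes $V_1,\dots,V_m$, indexed so that $V_i\cap T=\{u_i\}$ for each $i$. For non-adjacent $u\in T$ and $s\in S$, let $T(u,s)$ be the set of neighbours of $s$ in $T$ that are not adjacent to $u$. If $|V_i|\geq 3$ for some $i$ and $s\in S\cap V_i$, then every vertex of $T(u_i,s)$ is adjacent to every vertex of $T\setminus(T(u_i,s)\cup\{u_i\})$.
   Context: A colouring of $G$ is a map $c:V(G)\to\mathbb{Z}^+$ with adjacent vertices receiving distinct colours. A vertex is b-chromatic under $c$ if it is adjacent to a vertex of every colour used by $c$ other than its own; a b-colouring is a colouring in which every colour class has a b-chromatic vertex. $m(G)$ is the largest $k$ such that $G$ has at least $k$ vertices of degree at least $k-1$; a vertex of degree at least $m(G)-1$ is dense; $G$ is tight if it has exactly $m(G)$ dense vertices, each of degree exactly $m(G)-1$. $\delta T=\left(\bigcup_{u\in T}N(u)\right)\setminus T$. (In any b-colouring of a tight graph with $m(G)$ colours, each colour class contains exactly one vertex of $T$, so the indexing above exists.) *)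

theory Defs
  imports Main
begin

definition graph :: "'a set \<Rightarrow> ('a \<Rightarrow> 'a \<Rightarrow> bool) \<Rightarrow> bool" where
  "graph V E \<longleftrightarrow> finite V \<and> (\<forall>x y. E x y \<longrightarrow> x \<in> V \<and> y \<in> V)
     \<and> (\<forall>x y. E x y \<longrightarrow> E y x) \<and> (\<forall>x. \<not> E x x)"

definition nbrs :: "'a set \<Rightarrow> ('a \<Rightarrow> 'a \<Rightarrow> bool) \<Rightarrow> 'a \<Rightarrow> 'a set" where
  "nbrs V E v = {u \<in> V. E v u}"

definition deg :: "'a set \<Rightarrow> ('a \<Rightarrow> 'a \<Rightarrow> bool) \<Rightarrow> 'a \<Rightarrow> nat" where
  "deg V E v = card (nbrs V E v)"

definition mG :: "'a set \<Rightarrow> ('a \<Rightarrow> 'a \<Rightarrow> bool) \<Rightarrow> nat" where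
  "mG V E = (GREATEST k. k \<le> card {v \<in> V. k - 1 \<le> deg V E v})"

definition dense_set :: "'a set \<Rightarrow> ('a \<Rightarrow> 'a \<Rightarrow> bool) \<Rightarrow> 'a set" where
  "dense_set V E = {v \<in> V. mG V E - 1 \<le> deg V E v}"

definition tight :: "'a set \<Rightarrow> ('a \<Rightarrow> 'a \<Rightarrow> bool) \<Rightarrow> bool" where
  "tight V E \<longleftrightarrow> card (dense_set V E) = mG V E
     \<and> (\<forall>v \<in> dense_set V E. deg V E v = mG V E - 1)"

definition delta :: "'a set \<Rightarrow> ('a \<Rightarrow> 'a \<Rightarrow> bool) \<Rightarrow> 'a set \<Rightarrow> 'a set" where
  "delta V E T = (\<Union>u \<in> T. nbrs V E u) - T"

definition two_P2_P1_free :: "'a set \<Rightarrow> ('a \<Rightarrow> 'a \<Rightarrow> bool) \<Rightarrow> bool" where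
  "two_P2_P1_free V E \<longleftrightarrow> \<not> (\<exists>a\<in>V. \<exists>b\<in>V. \<exists>x\<in>V. \<exists>y\<in>V. \<exists>z\<in>V.
     distinct [a, b, x, y, z] \<and> E a b \<and> E x y
     \<and> \<not> E a x \<and> \<not> E a y \<and> \<not> E b x \<and> \<not> E b y
     \<and> \<not> E z a \<and> \<not> E z b \<and> \<not> E z x \<and> \<not> E z y)"

definition colouring :: "'a set \<Rightarrow> ('a \<Rightarrow> 'a \<Rightarrow> bool) \<Rightarrow> ('a \<Rightarrow> nat) \<Rightarrow> bool" where
  "colouring V E c \<longleftrightarrow> (\<forall>v \<in> V. 0 < c v) \<and> (\<forall>x y. E x y \<longrightarrow> c x \<noteq> c y)"

definition b_chromatic :: "'a set \<Rightarrow> ('a \<Rightarrow> 'a \<Rightarrow> bool) \<Rightarrow> ('a \<Rightarrow> nat) \<Rightarrow> 'a \<Rightarrow> bool" where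
  "b_chromatic V E c v \<longleftrightarrow> (\<forall>k \<in> c ` V. k \<noteq> c v \<longrightarrow> (\<exists>w \<in> V. E v w \<and> c w = k))"

definition b_colouring :: "'a set \<Rightarrow> ('a \<Rightarrow> 'a \<Rightarrow> bool) \<Rightarrow> ('a \<Rightarrow> nat) \<Rightarrow> bool" where
  "b_colouring V E c \<longleftrightarrow> colouring V E c
     \<and> (\<forall>k \<in> c ` V. \<exists>v \<in> V. c v = k \<and> b_chromatic V E c v)"

definition Tus :: "'a set \<Rightarrow> ('a \<Rightarrow> 'a \<Rightarrow> bool) \<Rightarrow> 'a \<Rightarrow> 'a \<Rightarrow> 'a set" where
  "Tus V E u s = {t \<in> dense_set V E. E s t \<and> \<not> E u t}"

end

theory Submission
  imports Defs
begin

text \<open>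
  In a tight graph coloured with m(G) colours, every b-chromatic vertex has degree at least
  m(G) - 1 and is therefore dense; as each colour class contains exactly one dense vertex, every
  dense vertex is b-chromatic, and since it has exactly m(G) - 1 neighbours, its neighbourhood is
  rainbow. Now let x \<in> T(u,s) and y \<in> T - T(u,s) - {u} be non-adjacent. If y is adjacent to u,
  the rainbow neighbourhoods of x and y keep a third vertex w of the colour class of u away from
  both, so the edges uy and sx together with w induce a 2P2+P1. Otherwise y sees neither u nor s,
  and the neighbour v of y in the colour class of u gives the induced 2P2+P1 formed by yv, sx and u.
\<close>

lemma two_P2_P1_freeD:
  assumes "graph V E" "two_P2_P1_free V E" "z \<in> V"
    and "E a b" "E x y" "\<not> E a x" "\<not> E a y" "\<not> E b x" "\<not> E b y"
    and "\<not> E z a" "\<not> E z b" "\<not> E z x" "\<not> E z y"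
  shows False
proof -
  have "a \<in> V" "b \<in> V" "x \<in> V" "y \<in> V"
    using assms(1,4,5) by (auto simp: graph_def)
  \<comment> \<open>E being symmetric and irreflexive, the edge pattern alone forces distinctness\<close>
  moreover have "distinct [a, b, x, y, z]"
    using assms(1,4-) by (auto simp: graph_def)
  ultimately show False
    using assms(2-) unfolding two_P2_P1_free_def by blast
qed

lemma colouring_same_colour_not_adj:
  assumes "colouring V E c" "c a = c b"
  shows "\<not> E a b"
  using assms by (auto simp: colouring_def)

lemma inj_on_nbrsD:
  assumes "graph V E" "inj_on c (nbrs V E t)" "E t a" "E t b" "c a = c b"
  shows "a = b"
  using assms by (auto simp: graph_def nbrs_def inj_on_def)

lemma b_chromatic_colours_subset:
  assumes "b_chromatic V E c v"
  shows "c ` V - {c v} \<subseteq> c ` nbrs V E v"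
proof
  fix k assume "k \<in> c ` V - {c v}"
  then obtain w where "w \<in> V" "E v w" "c w = k"
    using assms by (auto simp: b_chromatic_def)
  then show "k \<in> c ` nbrs V E v"
    by (auto simp: nbrs_def)
qed

lemma b_chromatic_deg_ge:
  assumes "finite V" "v \<in> V" "b_chromatic V E c v"
  shows "card (c ` V) - 1 \<le> deg V E v"
proof -
  have fin_nbrs: "finite (nbrs V E v)"
    using assms(1) by (simp add: nbrs_def)
  have "card (c ` V) - 1 = card (c ` V - {c v})"
    using assms(1,2) by (simp add: card_Diff_singleton)
  also have "\<dots> \<le> card (c ` nbrs V E v)"
    using b_chromatic_colours_subset[OF assms(3)] fin_nbrs by (intro card_mono) auto
  also have "\<dots> \<le> deg V E v"
    unfolding deg_def using fin_nbrs by (rule card_image_le)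
  finally show ?thesis .
qed

lemma b_chromatic_in_dense_set:
  assumes "finite V" "v \<in> V" "b_chromatic V E c v" "card (c ` V) = mG V E"
  shows "v \<in> dense_set V E"
  using b_chromatic_deg_ge[OF assms(1-3)] assms(2,4) by (simp add: dense_set_def)

lemma dense_vertex_b_chromatic:
  assumes "b_colouring V E c" "finite V" "card (c ` V) = mG V E"
    and "inj_on c (dense_set V E)" "t \<in> dense_set V E"
  shows "b_chromatic V E c t"
proof -
  obtain v where v: "v \<in> V" "c v = c t" "b_chromatic V E c v"
    using assms(1,5) by (auto simp: b_colouring_def dense_set_def)
  have "v \<in> dense_set V E"
    using b_chromatic_in_dense_set[OF assms(2) v(1,3) assms(3)] .
  with assms(4,5) v(2) have "v = t"
    by (auto dest: inj_onD)
  with v(3) show ?thesis by simp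
qed

lemma b_chromatic_min_deg_inj_on_nbrs:
  assumes "colouring V E c" "finite V" "t \<in> V" "b_chromatic V E c t"
    and "deg V E t = card (c ` V) - 1"
  shows "inj_on c (nbrs V E t)"
proof (rule eq_card_imp_inj_on)
  show "finite (nbrs V E t)"
    using assms(2) by (simp add: nbrs_def)
  have "c ` nbrs V E t = c ` V - {c t}"
  proof
    show "c ` nbrs V E t \<subseteq> c ` V - {c t}"
      using assms(1) by (fastforce simp: nbrs_def colouring_def)
    show "c ` V - {c t} \<subseteq> c ` nbrs V E t"
      using assms(4) by (rule b_chromatic_colours_subset)
  qed
  then show "card (c ` nbrs V E t) = card (nbrs V E t)"
    using assms(2,3,5) by (simp add: deg_def card_Diff_singleton)
qed

lemma tight_b_colouring_dense_vertex:
  assumes "graph V E" "tight V E" "b_colouring V E c" "card (c ` V) = mG V E"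
    and "inj_on c (dense_set V E)" "t \<in> dense_set V E"
  shows "b_chromatic V E c t" "inj_on c (nbrs V E t)"
proof -
  have fin: "finite V"
    using assms(1) by (simp add: graph_def)
  show b_chrom: "b_chromatic V E c t"
    using dense_vertex_b_chromatic[OF assms(3) fin assms(4,5,6)] .
  have "colouring V E c"
    using assms(3) by (simp add: b_colouring_def)
  then show "inj_on c (nbrs V E t)"
    using b_chromatic_min_deg_inj_on_nbrs[OF _ fin _ b_chrom] assms(2,4,6)
    by (auto simp: tight_def dense_set_def)
qed

lemma inj_on_colour_of_class_reps:
  assumes "bij_betw u I D" "\<forall>j \<in> I. {v \<in> V. c v = c (u j)} \<inter> D = {u j}" "D \<subseteq> V"
  shows "inj_on c D"
proof (rule inj_onI)
  fix a b assume ab: "a \<in> D" "b \<in> D" "c a = c b"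
  obtain j where j: "j \<in> I" "a = u j"
    using assms(1) ab(1) by (auto simp: bij_betw_def)
  have "b \<in> {v \<in> V. c v = c (u j)} \<inter> D"
    using ab assms(3) j(2) by auto
  then show "a = b"
    using assms(2) j by auto
qed

lemma exists_third_element:
  assumes "3 \<le> card A"
  obtains w where "w \<in> A" "w \<noteq> a" "w \<noteq> b"
proof -
  have "card {a, b} \<le> 2"
    by (simp add: card_insert_if)
  then have "\<not> A \<subseteq> {a, b}"
    using assms card_mono[of "{a, b}" A] by auto
  then show ?thesis
    using that by blast
qed

lemma two_P2_P1_free_edge_from_class_triple:
  assumes "graph V E" "two_P2_P1_free V E" "colouring V E c"
    and "inj_on c (nbrs V E x)" "inj_on c (nbrs V E y)"
    and "c s = c u" "c w = c u" "distinct [u, s, w]" "w \<in> V"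
    and "E s x" "\<not> E u x" "E u y"
  shows "E x y"
proof (rule ccontr)
  assume "\<not> E x y"
  have sym: "E a b \<longleftrightarrow> E b a" for a b
    using assms(1) by (auto simp: graph_def)
  have "\<not> E y s" "\<not> E w y"
    using inj_on_nbrsD[OF assms(1,5), of u] assms(6-8,12) sym by auto
  moreover have "\<not> E w x"
    using inj_on_nbrsD[OF assms(1,4), of s] assms(6-8,10) sym by auto
  moreover have "\<not> E u s" "\<not> E w u" "\<not> E w s"
    using colouring_same_colour_not_adj[OF assms(3)] assms(6,7) by metis+
  moreover have "\<not> E y x"
    using \<open>\<not> E x y\<close> sym by simp
  ultimately show False
    using two_P2_P1_freeD[OF assms(1,2,9,12,10)] assms(11) by blast
qed

lemma two_P2_P1_free_edge_from_b_chromatic: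
  assumes "graph V E" "two_P2_P1_free V E" "colouring V E c"
    and "inj_on c (nbrs V E x)" "b_chromatic V E c y"
    and "u \<in> V" "c y \<noteq> c u" "c s = c u"
    and "E s x" "\<not> E u x" "\<not> E u y" "\<not> E s y"
  shows "E x y"
proof (rule ccontr)
  assume "\<not> E x y"
  have sym: "E a b \<longleftrightarrow> E b a" for a b
    using assms(1) by (auto simp: graph_def)
  obtain v where v: "E y v" "c v = c u"
    using assms(5-7) by (auto simp: b_chromatic_def)
  have "\<not> E v x"
    using inj_on_nbrsD[OF assms(1,4), of s v] v assms(8,9,12) sym by auto
  moreover have "\<not> E v s" "\<not> E u v" "\<not> E u s"
    using colouring_same_colour_not_adj[OF assms(3)] assms(8) v(2) by metis+
  moreover have "\<not> E y s" "\<not> E y x"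
    using assms(12) \<open>\<not> E x y\<close> sym by simp_all
  ultimately show False
    using two_P2_P1_freeD[OF assms(1,2,6) v(1) assms(9)] assms(10,11) by blast
qed

theorem mainTheorem9:
  fixes V :: "'a set" and E :: "'a \<Rightarrow> 'a \<Rightarrow> bool" and c :: "'a \<Rightarrow> nat"
    and u :: "nat \<Rightarrow> 'a" and i :: nat and s :: 'a
  assumes "graph V E"
    and "tight V E"
    and "two_P2_P1_free V E"
    and "b_colouring V E c"
    and "card (c ` V) = mG V E"
    and "bij_betw u {1..mG V E} (dense_set V E)"
    and "\<forall>j \<in> {1..mG V E}. {v \<in> V. c v = c (u j)} \<inter> dense_set V E = {u j}"
    and "i \<in> {1..mG V E}"
    and "card {v \<in> V. c v = c (u i)} \<ge> 3"
    and "s \<in> delta V E (dense_set V E)"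
    and "c s = c (u i)"
  shows "\<forall>x \<in> Tus V E (u i) s. \<forall>y \<in> dense_set V E - (Tus V E (u i) s \<union> {u i}). E x y"
proof (intro ballI)
  let ?D = "dense_set V E"
  fix x y assume x: "x \<in> Tus V E (u i) s" and y: "y \<in> ?D - (Tus V E (u i) s \<union> {u i})"
  have col: "colouring V E c"
    using assms(4) by (simp add: b_colouring_def)
  have inj_D: "inj_on c ?D"
    using assms(6,7) by (rule inj_on_colour_of_class_reps) (auto simp: dense_set_def)
  note dense = tight_b_colouring_dense_vertex[OF assms(1,2,4,5) inj_D]
  have ui: "u i \<in> ?D" "u i \<in> V" and s: "s \<in> V" "s \<notin> ?D"
    using assms(6,8,10) by (auto simp: bij_betw_def delta_def nbrs_def dense_set_def)
  obtain w where w: "w \<in> V" "c w = c (u i)" "w \<noteq> u i" "w \<noteq> s"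
    using exists_third_element[OF assms(9)] by blast
  have xy: "x \<in> ?D" "E s x" "\<not> E (u i) x" "y \<in> ?D" "y \<noteq> u i" "\<not> (E s y \<and> \<not> E (u i) y)"
    using x y by (auto simp: Tus_def)
  have "c y \<noteq> c (u i)" and "distinct [u i, s, w]"
    using inj_D xy(4,5) ui s w by (auto dest: inj_onD)
  then show "E x y"
    using two_P2_P1_free_edge_from_class_triple[OF assms(1,3) col dense(2)[OF xy(1)]
        dense(2)[OF xy(4)] assms(11) w(2) _ w(1) xy(2,3)]
      two_P2_P1_free_edge_from_b_chromatic[OF assms(1,3) col dense(2)[OF xy(1)]
        dense(1)[OF xy(4)] ui(2) _ assms(11) xy(2,3)]
      xy(6)
    by blast
qed

end
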